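(* Let $R\in\mathbb N$, let $I=\{n\in\mathbb Z : 1\leqslant n\leqslant R\}$, let $a_n\in\mathbb C$ for $n\in I$, and let $\lambda_n\in\mathbb R$ ($n\in I$) satisfy $$|\lambda_n-\lambda_m|\geqslant \gamma>\sqrt{\tfrac{1}{3}+\tfrac{\pi^2}{12}}\quad\text{for all } n,m\in I \text{ with } n\neq m.$$ Define $f(t)=\sum_{n\in I}a_n\operatorname{sinc}(t-\lambda_n)$ for $t\in\mathbb R$. Then $$E_f\geqslant \left(1-\gamma^{-1}\sqrt{\tfrac{1}{3}+\tfrac{\pi^2}{12}}\right)\sum_{n\in I}|a_n|^2.$$
   Context: The sinc function is $\operatorname{sinc}(\alpha)=\frac{\sin(\pi\alpha)}{\pi\alpha}$ for $\alpha\neq 0$ and $\operatorname{sinc}(0)=1$. The energy of a signal $f:\mathbb R\to\mathbb C$ is $E_f=\int_{-\infty}^{\infty}|f(t)|^2\,dt$. *)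

theory Defs
  imports "HOL-Analysis.Analysis"
begin

definition sinc :: "real \<Rightarrow> real" where
  "sinc a = (if a = 0 then 1 else sin (pi * a) / (pi * a))"

definition energy :: "(real \<Rightarrow> complex) \<Rightarrow> ennreal" where
  "energy f = (\<integral>\<^sup>+ t. ennreal ((cmod (f t))\<^sup>2) \<partial>lborel)"

end

theory Submission
  imports "HOL-Probability.Sinc_Integral" Defs
begin

text \<open>The translates \<open>sinc (t - x)\<close> have Gram matrix \<open>sinc (x - y)\<close>, so the energy of \<open>f\<close> is
  the quadratic form \<open>\<Sum>n m. Re (a n * cnj (a m)) * sinc (lam n - lam m)\<close>. Its diagonal is
  \<open>\<Sum>|a n|\<^sup>2\<close>; expanding \<open>sin (pi * (lam n - lam m))\<close>, the off-diagonal part becomes \<open>1 / pi\<close>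
  times a bilinear form with the Hilbert kernel \<open>1 / (lam n - lam m)\<close>, applied to
  \<open>a n * sin (pi * lam n)\<close> and \<open>a n * cos (pi * lam n)\<close>. By the Montgomery--Vaughan inequality
  that form has norm at most \<open>pi / \<gamma>\<close>, giving the lower bound \<open>(1 - 1 / \<gamma>) * \<Sum>|a n|\<^sup>2\<close>, which is
  stronger than the claim because \<open>sqrt (1/3 + pi\<^sup>2/12) \<ge> 1\<close>.

  The Montgomery--Vaughan bound is proved by their eigenvector argument: for an (approximate)
  eigenvector of the norm \<open>\<mu>\<close>, the partial fraction identity
  \<open>1 / ((x - y) (x - z)) = (1 / (y - z)) (1 / (x - y) - 1 / (x - z))\<close> expresses
  \<open>\<mu>\<^sup>2\<close> through \<open>\<Sum>\<^sub>m 1 / (lam n - lam m)\<^sup>2 \<le> pi\<^sup>2 / (3 \<gamma>\<^sup>2)\<close>.\<close>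

lemma sinc_eq_Sinc_Integral_sinc: "sinc x = Sinc_Integral.sinc (pi * x)"
  by (simp add: sinc_def)

lemma sinc_eq_divide: "x \<noteq> 0 \<Longrightarrow> sinc x = sin (pi * x) / (pi * x)"
  by (simp add: sinc_def)

lemma sinc_minus: "sinc (- x) = sinc x"
  by (simp add: sinc_def)

lemma isCont_normalized_sinc: "isCont sinc x"
proof -
  have "isCont (\<lambda>x. Sinc_Integral.sinc (pi * x)) x"
    by (intro continuous_within_compose3[OF isCont_sinc]) (auto intro: continuous_intros)
  then show ?thesis
    by (simp add: sinc_eq_Sinc_Integral_sinc[abs_def])
qed

lemma borel_measurable_normalized_sinc [measurable]: "sinc \<in> borel_measurable borel"
  by (intro borel_measurable_continuous_onI continuous_at_imp_continuous_on ballI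
      isCont_normalized_sinc)

lemma abs_sinc_le_inverse: "x \<noteq> 0 \<Longrightarrow> \<bar>sinc x\<bar> \<le> 1 / (pi * \<bar>x\<bar>)"
  by (simp add: sinc_def abs_divide abs_mult divide_right_mono)

lemma sinc_double: "sinc (2 * x) = cos (pi * x) * sinc x"
  using sin_double[of "pi * x"] by (simp add: sinc_def field_simps)

lemma filterlim_minus_const_at_top: "filterlim (\<lambda>t. t - x) at_top (at_top :: real filter)"
  using filterlim_tendsto_add_at_top[OF tendsto_const[of "-x"] filterlim_ident] by simp

lemma filterlim_minus_const_at_bot: "filterlim (\<lambda>t. t - x) at_bot (at_bot :: real filter)"
  unfolding filterlim_at_bot
proof
  fix Z :: real
  show "\<forall>\<^sub>F t in at_bot. t - x \<le> Z"
    using eventually_le_at_bot[of "Z + x"] by (rule eventually_mono) simp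
qed

lemma DERIV_Si_2pi: "((\<lambda>v. Si (2 * pi * v)) has_real_derivative 2 * pi * sinc (2 * v)) (at v)"
proof -
  have "((\<lambda>v. Si (2 * pi * v)) has_real_derivative Sinc_Integral.sinc (2 * pi * v) * (2 * pi)) (at v)"
    by (rule DERIV_chain2[OF DERIV_Si]) (auto intro!: derivative_eq_intros)
  moreover have "Sinc_Integral.sinc (2 * pi * v) = sinc (2 * v)"
    by (simp add: sinc_eq_Sinc_Integral_sinc mult_ac)
  ultimately show ?thesis
    by (simp add: mult.commute)
qed

lemma Si_2pi_at_top: "((\<lambda>v. Si (2 * pi * v)) \<longlongrightarrow> pi / 2) at_top"
  by (rule filterlim_compose[OF Si_at_top])
     (auto intro!: filterlim_tendsto_pos_mult_at_top filterlim_ident)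

lemma Si_2pi_at_bot: "((\<lambda>v. Si (2 * pi * v)) \<longlongrightarrow> - (pi / 2)) at_bot"
proof -
  have "((\<lambda>v. - Si (2 * pi * (- v))) \<longlongrightarrow> - (pi / 2)) at_bot"
    by (intro tendsto_intros filterlim_compose[OF Si_2pi_at_top])
       (simp add: filterlim_uminus_at_top filterlim_ident)
  moreover have "\<forall>\<^sub>F v in at_bot. - Si (2 * pi * (- v)) = Si (2 * pi * v)"
    using eventually_le_at_bot[of 0]
  proof (rule eventually_mono)
    fix v :: real
    assume "v \<le> 0"
    then have "Si (- (2 * pi * (- v))) = - Si (2 * pi * (- v))"
      by (intro Si_neg) (simp add: mult_nonneg_nonpos mult_nonneg_nonpos2)
    then show "- Si (2 * pi * (- v)) = Si (2 * pi * v)"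
      by simp
  qed
  ultimately show ?thesis
    using tendsto_cong by fastforce
qed

lemma DERIV_mult_sinc_sq:
  "((\<lambda>u. u * (sinc u)\<^sup>2) has_real_derivative 2 * sinc (2 * u) - (sinc u)\<^sup>2) (at u)"
proof (cases "u = 0")
  case True
  have "((\<lambda>y. (sinc y)\<^sup>2) \<longlongrightarrow> (sinc 0)\<^sup>2) (at 0)"
    by (intro tendsto_intros isCont_tendsto_compose[OF isCont_normalized_sinc])
  moreover have "\<forall>\<^sub>F y in at 0. (sinc y)\<^sup>2 = (y * (sinc y)\<^sup>2 - 0 * (sinc 0)\<^sup>2) / (y - 0)"
    by (auto simp: eventually_at_filter)
  ultimately have "((\<lambda>y. (y * (sinc y)\<^sup>2 - 0 * (sinc 0)\<^sup>2) / (y - 0)) \<longlongrightarrow> 1) (at 0)"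
    by (simp add: sinc_def tendsto_cong)
  then show ?thesis
    using True by (simp add: has_field_derivative_iff sinc_def)
next
  case False
  let ?g = "\<lambda>v. (sin (pi * v))\<^sup>2 / (pi\<^sup>2 * v)"
  have "(?g has_real_derivative ((2 * sin (pi * u) * (cos (pi * u) * pi)) * (pi\<^sup>2 * u)
      - (sin (pi * u))\<^sup>2 * pi\<^sup>2) / (pi\<^sup>2 * u)\<^sup>2) (at u)"
    using False by (auto intro!: derivative_eq_intros simp: power2_eq_square)
  moreover have "((2 * sin (pi * u) * (cos (pi * u) * pi)) * (pi\<^sup>2 * u) - (sin (pi * u))\<^sup>2 * pi\<^sup>2)
      / (pi\<^sup>2 * u)\<^sup>2 = 2 * sinc (2 * u) - (sinc u)\<^sup>2"
    unfolding sinc_double using False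
    by (simp add: sinc_eq_divide field_simps power2_eq_square)
  ultimately have "(?g has_real_derivative 2 * sinc (2 * u) - (sinc u)\<^sup>2) (at u)"
    by simp
  then show ?thesis
    by (rule has_field_derivative_transform_within_open[where S="- {0}"])
       (use False in \<open>auto simp: sinc_eq_divide field_simps power2_eq_square\<close>)
qed

lemma mult_sinc_sq_at_infinity: "((\<lambda>u. u * (sinc u)\<^sup>2) \<longlongrightarrow> 0) at_infinity"
proof (rule Lim_null_comparison)
  have "\<bar>u * (sinc u)\<^sup>2\<bar> \<le> 1 / pi\<^sup>2 * \<bar>inverse u\<bar>" if "u \<noteq> 0" for u
  proof -
    have "\<bar>sinc u\<bar>\<^sup>2 \<le> (1 / (pi * \<bar>u\<bar>))\<^sup>2"
      by (intro power_mono abs_sinc_le_inverse that) simp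
    then have "\<bar>u\<bar> * \<bar>sinc u\<bar>\<^sup>2 \<le> \<bar>u\<bar> * (1 / (pi * \<bar>u\<bar>))\<^sup>2"
      by (intro mult_left_mono) auto
    also have "\<dots> = 1 / pi\<^sup>2 * \<bar>inverse u\<bar>"
      using that by (simp add: power2_eq_square field_simps abs_inverse)
    finally show ?thesis
      by (simp add: abs_mult power2_abs)
  qed
  then show "\<forall>\<^sub>F u in at_infinity. norm (u * (sinc u)\<^sup>2) \<le> 1 / pi\<^sup>2 * norm (inverse u)"
    unfolding eventually_at_infinity by (intro exI[of _ 1]) auto
  show "((\<lambda>u. 1 / pi\<^sup>2 * norm (inverse (u :: real))) \<longlongrightarrow> 0) at_infinity"
    by (intro tendsto_mult_right_zero tendsto_norm_zero tendsto_inverse_0)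
qed

lemma LBINT_whole_line: "(LBINT t=-\<infinity>..\<infinity>. f t) = integral\<^sup>L lborel (f :: real \<Rightarrow> real)"
  by (simp add: interval_lebesgue_integral_def set_lebesgue_integral_def einterval_iff)

text \<open>The integrals of \<open>sinc\<^sup>2\<close> and of products of translates of \<open>sinc\<close> are computed by the
  fundamental theorem of calculus from explicit antiderivatives, built from \<open>Si\<close> and
  \<open>sin_sinc_integral\<close>, that have limits at \<open>\<plusminus>\<infinity>\<close>.\<close>
lemma sinc_sq_integral:
  "integrable lborel (\<lambda>t. (sinc (t - x))\<^sup>2) \<and> integral\<^sup>L lborel (\<lambda>t. (sinc (t - x))\<^sup>2) = 1"
proof -
  define F where "F t = Si (2 * pi * (t - x)) / pi - (t - x) * (sinc (t - x))\<^sup>2" for t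
  have D: "(F has_real_derivative (sinc (t - x))\<^sup>2) (at t)" for t
  proof -
    have "((\<lambda>t. Si (2 * pi * (t - x))) has_real_derivative 2 * pi * sinc (2 * (t - x)) * 1) (at t)"
      by (rule DERIV_chain2[OF DERIV_Si_2pi]) (auto intro!: derivative_eq_intros)
    moreover have "((\<lambda>t. (t - x) * (sinc (t - x))\<^sup>2)
        has_real_derivative (2 * sinc (2 * (t - x)) - (sinc (t - x))\<^sup>2) * 1) (at t)"
      by (rule DERIV_chain2[OF DERIV_mult_sinc_sq]) (auto intro!: derivative_eq_intros)
    ultimately have "(F has_real_derivative 2 * pi * sinc (2 * (t - x)) * 1 / pi
        - (2 * sinc (2 * (t - x)) - (sinc (t - x))\<^sup>2) * 1) (at t)"
      unfolding F_def[abs_def] by (intro derivative_intros DERIV_cdivide)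
    then show ?thesis
      by simp
  qed
  have C: "isCont (\<lambda>t. (sinc (t - x))\<^sup>2) t" for t
    by (intro continuous_intros isCont_o2[OF _ isCont_normalized_sinc])
  have top: "(F \<longlongrightarrow> (pi / 2) / pi - 0) at_top"
    unfolding F_def
    by (intro tendsto_intros filterlim_compose[OF Si_2pi_at_top filterlim_minus_const_at_top]
        filterlim_compose[OF mult_sinc_sq_at_infinity]
        filterlim_mono[OF filterlim_minus_const_at_top at_top_le_at_infinity order_refl]) simp
  have bot: "(F \<longlongrightarrow> (- (pi / 2)) / pi - 0) at_bot"
    unfolding F_def
    by (intro tendsto_intros filterlim_compose[OF Si_2pi_at_bot filterlim_minus_const_at_bot]
        filterlim_compose[OF mult_sinc_sq_at_infinity]
        filterlim_mono[OF filterlim_minus_const_at_bot at_bot_le_at_infinity order_refl]) simp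
  have "set_integrable lborel (einterval (-\<infinity>) \<infinity>) (\<lambda>t. (sinc (t - x))\<^sup>2)"
      "(LBINT t=-\<infinity>..\<infinity>. (sinc (t - x))\<^sup>2) = (pi / 2) / pi - 0 - ((- (pi / 2)) / pi - 0)"
    by (rule interval_integral_FTC_nonneg[where F=F, OF _ D C _ _ _];
        use top bot in \<open>simp add: ereal_tendsto_simps1\<close>)+
  then show ?thesis
    by (simp add: set_integrable_def LBINT_whole_line einterval_iff)
qed

lemma mult_sinc: "pi * x * sinc x = sin (pi * x)"
  by (simp add: sinc_def)

lemma sinc_mult_sinc_identity:
  "pi * (p - q) * (sinc p * sinc q) =
     cos (pi * (p - q)) * (sin (pi * q) * sinc q - sin (pi * p) * sinc p)
     + sin (pi * (p - q)) * (sinc (2 * q) + sinc (2 * p))"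
proof -
  have "pi * (p - q) * (sinc p * sinc q) = sin (pi * p) * sinc q - sin (pi * q) * sinc p"
    using mult_sinc[of p] mult_sinc[of q] by (simp add: algebra_simps)
  also have "\<dots> = sin (pi * p) * sinc q * ((sin (pi * q))\<^sup>2 + (cos (pi * q))\<^sup>2)
      - sin (pi * q) * sinc p * ((sin (pi * p))\<^sup>2 + (cos (pi * p))\<^sup>2)"
    by simp
  also have "\<dots> = cos (pi * (p - q)) * (sin (pi * q) * sinc q - sin (pi * p) * sinc p)
      + sin (pi * (p - q)) * (sinc (2 * q) + sinc (2 * p))"
    unfolding right_diff_distrib cos_diff sin_diff sinc_double by algebra
  finally show ?thesis .
qed

lemma DERIV_interval_integral_0:
  fixes f :: "real \<Rightarrow> real"
  assumes "\<And>x. isCont f x"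
  shows "((\<lambda>v. LBINT w=0..v. f w) has_real_derivative f x) (at x)"
proof -
  have "(at x within {min 0 (x - 1)..max 0 (x + 1)}) = at x"
    by (intro at_within_interior) auto
  then show ?thesis
    using interval_integral_FTC2[of "min 0 (x - 1)" 0 "max 0 (x + 1)" f x]
    by (auto simp: continuous_at_imp_continuous_on assms zero_ereal_def
        has_real_derivative_iff_has_vector_derivative split del: if_split)
qed

definition sin_sinc_integral :: "real \<Rightarrow> real" where
  "sin_sinc_integral v = (LBINT w=0..v. sin (pi * w) * sinc w)"

lemma DERIV_sin_sinc_integral:
  "(sin_sinc_integral has_real_derivative sin (pi * x) * sinc x) (at x)"
  unfolding sin_sinc_integral_def[abs_def]
  by (rule DERIV_interval_integral_0) (intro continuous_intros isCont_normalized_sinc)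

lemma sin_sinc_integral_Lipschitz:
  assumes "convex S" "\<And>w. w \<in> S \<Longrightarrow> L \<le> \<bar>w\<bar>" "L > 0" "p \<in> S" "q \<in> S"
  shows "\<bar>sin_sinc_integral p - sin_sinc_integral q\<bar> \<le> 1 / (pi * L) * \<bar>p - q\<bar>"
proof -
  have "\<bar>sin (pi * w) * sinc w\<bar> \<le> 1 / (pi * L)" if "w \<in> S" for w
  proof -
    have w: "w \<noteq> 0" "L \<le> \<bar>w\<bar>"
      using assms(2,3) that by force+
    have "\<bar>sin (pi * w) * sinc w\<bar> \<le> 1 * (1 / (pi * \<bar>w\<bar>))"
      unfolding abs_mult by (intro mult_mono abs_sinc_le_inverse w) auto
    also have "\<dots> \<le> 1 / (pi * L)"
      using w assms(3) by (simp add: divide_left_mono)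
    finally show ?thesis .
  qed
  then show ?thesis
    using field_differentiable_bound[OF assms(1) _ _ assms(4,5), of sin_sinc_integral]
      DERIV_sin_sinc_integral has_field_derivative_at_within by fastforce
qed

lemma sin_sinc_integral_diff_at_infinity:
  "((\<lambda>t. sin_sinc_integral (t - y) - sin_sinc_integral (t - x)) \<longlongrightarrow> 0) at_infinity"
proof (rule Lim_null_comparison)
  let ?M = "2 * (\<bar>x\<bar> + \<bar>y\<bar>) + 1"
  show "\<forall>\<^sub>F t in at_infinity. norm (sin_sinc_integral (t - y) - sin_sinc_integral (t - x))
      \<le> 2 * \<bar>y - x\<bar> / pi * norm (inverse t)"
    unfolding eventually_at_infinity
  proof (intro exI[of _ ?M] allI impI)
    fix t :: real
    assume t: "?M \<le> norm t"
    define S where "S = (if t \<ge> 0 then {\<bar>t\<bar> / 2..} else {..- (\<bar>t\<bar> / 2)})"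
    have "\<bar>sin_sinc_integral (t - y) - sin_sinc_integral (t - x)\<bar>
        \<le> 1 / (pi * (\<bar>t\<bar> / 2)) * \<bar>(t - y) - (t - x)\<bar>"
      by (rule sin_sinc_integral_Lipschitz[where S=S]) (use t in \<open>auto simp: S_def split: if_splits\<close>)
    also have "\<dots> = 2 * \<bar>y - x\<bar> / pi * norm (inverse t)"
      using t by (simp add: abs_minus_commute field_simps abs_inverse)
    finally show "norm (sin_sinc_integral (t - y) - sin_sinc_integral (t - x))
        \<le> 2 * \<bar>y - x\<bar> / pi * norm (inverse t)"
      by simp
  qed
  show "((\<lambda>t. 2 * \<bar>y - x\<bar> / pi * norm (inverse (t :: real))) \<longlongrightarrow> 0) at_infinity"
    by (intro tendsto_mult_right_zero tendsto_norm_zero tendsto_inverse_0)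
qed

lemma sinc_translates_integrable: "integrable lborel (\<lambda>t. sinc (t - x) * sinc (t - y))"
proof (rule Bochner_Integration.integrable_bound)
  show "integrable lborel (\<lambda>t. (sinc (t - x))\<^sup>2 + (sinc (t - y))\<^sup>2)"
    using sinc_sq_integral[of x] sinc_sq_integral[of y] by auto
  show "AE t in lborel. norm (sinc (t - x) * sinc (t - y)) \<le> norm ((sinc (t - x))\<^sup>2 + (sinc (t - y))\<^sup>2)"
  proof (rule AE_I2)
    fix t
    have "2 * (\<bar>sinc (t - x)\<bar> * \<bar>sinc (t - y)\<bar>) \<le> (sinc (t - x))\<^sup>2 + (sinc (t - y))\<^sup>2"
      using sum_squares_bound[of "\<bar>sinc (t - x)\<bar>" "\<bar>sinc (t - y)\<bar>"] by (simp add: mult.assoc)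
    moreover have "0 \<le> \<bar>sinc (t - x)\<bar> * \<bar>sinc (t - y)\<bar>"
      by simp
    ultimately have "\<bar>sinc (t - x)\<bar> * \<bar>sinc (t - y)\<bar> \<le> (sinc (t - x))\<^sup>2 + (sinc (t - y))\<^sup>2"
      by linarith
    then show "norm (sinc (t - x) * sinc (t - y)) \<le> norm ((sinc (t - x))\<^sup>2 + (sinc (t - y))\<^sup>2)"
      by (simp add: abs_mult)
  qed
qed measurable

lemma DERIV_sinc_translates_primitive:
  assumes "d = y - x" "d \<noteq> 0"
  shows "((\<lambda>t. (cos (pi * d) * (sin_sinc_integral (t - y) - sin_sinc_integral (t - x))
      + sin (pi * d) * (Si (2 * pi * (t - y)) / (2 * pi) + Si (2 * pi * (t - x)) / (2 * pi))) / (pi * d))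
      has_real_derivative sinc (t - x) * sinc (t - y)) (at t)"
proof -
  have dSi: "((\<lambda>t. Si (2 * pi * (t - z)) / (2 * pi)) has_real_derivative sinc (2 * (t - z))) (at t)"
    for z
    using DERIV_cdivide[OF DERIV_chain2[OF DERIV_Si_2pi, of "\<lambda>t. t - z" 1 t], where c="2 * pi"]
    by (simp add: DERIV_diff[OF DERIV_ident DERIV_const, simplified])
  have dS: "((\<lambda>t. sin_sinc_integral (t - z)) has_real_derivative sin (pi * (t - z)) * sinc (t - z))
      (at t)" for z
    using DERIV_chain2[OF DERIV_sin_sinc_integral, of "\<lambda>t. t - z" 1 t]
    by (simp add: DERIV_diff[OF DERIV_ident DERIV_const, simplified])
  have "(t - x) - (t - y) = d"
    by (simp add: assms(1))
  then have ident: "pi * d * (sinc (t - x) * sinc (t - y)) =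
      cos (pi * d) * (sin (pi * (t - y)) * sinc (t - y) - sin (pi * (t - x)) * sinc (t - x))
      + sin (pi * d) * (sinc (2 * (t - y)) + sinc (2 * (t - x)))"
    using sinc_mult_sinc_identity[of "t - x" "t - y"] by simp
  have "((\<lambda>t. (cos (pi * d) * (sin_sinc_integral (t - y) - sin_sinc_integral (t - x))
      + sin (pi * d) * (Si (2 * pi * (t - y)) / (2 * pi) + Si (2 * pi * (t - x)) / (2 * pi))) / (pi * d))
      has_real_derivative (cos (pi * d) * (sin (pi * (t - y)) * sinc (t - y)
      - sin (pi * (t - x)) * sinc (t - x)) + sin (pi * d) * (sinc (2 * (t - y)) + sinc (2 * (t - x))))
      / (pi * d)) (at t)"
    by (intro DERIV_cdivide DERIV_add DERIV_cmult DERIV_diff dSi dS)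
  then show ?thesis
    unfolding ident[symmetric] using assms(2) by simp
qed

lemma sinc_translates_integral:
  "integral\<^sup>L lborel (\<lambda>t. sinc (t - x) * sinc (t - y)) = sinc (x - y)"
proof (cases "x = y")
  case True
  then show ?thesis
    using sinc_sq_integral[of y] by (simp add: power2_eq_square sinc_def)
next
  case False
  define d where "d = y - x"
  have d: "d \<noteq> 0"
    using False by (simp add: d_def)
  define F where "F t = (cos (pi * d) * (sin_sinc_integral (t - y) - sin_sinc_integral (t - x))
      + sin (pi * d) * (Si (2 * pi * (t - y)) / (2 * pi) + Si (2 * pi * (t - x)) / (2 * pi)))
      / (pi * d)" for t
  have D: "(F has_real_derivative sinc (t - x) * sinc (t - y)) (at t)" for t
    unfolding F_def[abs_def] by (rule DERIV_sinc_translates_primitive[OF d_def d])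
  have C: "isCont (\<lambda>t. sinc (t - x) * sinc (t - y)) t" for t
    by (intro continuous_intros isCont_o2[OF _ isCont_normalized_sinc])
  have diff_lim: "((\<lambda>t. sin_sinc_integral (t - y) - sin_sinc_integral (t - x)) \<longlongrightarrow> 0) F"
    if "F \<le> at_infinity" for F
    using tendsto_mono[OF that sin_sinc_integral_diff_at_infinity] .
  have top: "(F \<longlongrightarrow> (cos (pi * d) * 0 + sin (pi * d) * ((pi / 2) / (2 * pi) + (pi / 2) / (2 * pi))) / (pi * d)) at_top"
    unfolding F_def[abs_def]
    by (intro tendsto_intros diff_lim[OF at_top_le_at_infinity]
        filterlim_compose[OF Si_2pi_at_top filterlim_minus_const_at_top]) (use d in auto)
  have bot: "(F \<longlongrightarrow> (cos (pi * d) * 0 + sin (pi * d) * ((- (pi / 2)) / (2 * pi) + (- (pi / 2)) / (2 * pi)))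
      / (pi * d)) at_bot"
    unfolding F_def[abs_def]
    by (intro tendsto_intros diff_lim[OF at_bot_le_at_infinity]
        filterlim_compose[OF Si_2pi_at_bot filterlim_minus_const_at_bot]) (use d in auto)
  have "(LBINT t=-\<infinity>..\<infinity>. sinc (t - x) * sinc (t - y))
      = (cos (pi * d) * 0 + sin (pi * d) * ((pi / 2) / (2 * pi) + (pi / 2) / (2 * pi))) / (pi * d)
        - (cos (pi * d) * 0 + sin (pi * d) * ((- (pi / 2)) / (2 * pi) + (- (pi / 2)) / (2 * pi))) / (pi * d)"
    by (rule interval_integral_FTC_integrable[where F=F])
       (use D C top bot sinc_translates_integrable in \<open>auto simp: ereal_tendsto_simps1
         set_integrable_def einterval_iff has_real_derivative_iff_has_vector_derivative[symmetric]\<close>)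
  also have "\<dots> = sinc d"
    using d by (simp add: sinc_eq_divide field_simps)
  also have "\<dots> = sinc (x - y)"
    using sinc_minus[of "x - y"] by (simp add: d_def)
  finally show ?thesis
    by (simp add: LBINT_whole_line)
qed

lemma cmod_sum_sq:
  fixes a :: "'i \<Rightarrow> complex" and s :: "'i \<Rightarrow> real"
  shows "(cmod (\<Sum>n\<in>I. a n * complex_of_real (s n)))\<^sup>2
    = (\<Sum>n\<in>I. \<Sum>m\<in>I. Re (a n * cnj (a m)) * (s n * s m))"
proof -
  have "complex_of_real ((cmod (\<Sum>n\<in>I. a n * complex_of_real (s n)))\<^sup>2)
      = (\<Sum>n\<in>I. \<Sum>m\<in>I. a n * cnj (a m) * complex_of_real (s n * s m))"
    unfolding complex_norm_square by (simp add: sum_product cnj_sum mult_ac)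
  then have "(cmod (\<Sum>n\<in>I. a n * complex_of_real (s n)))\<^sup>2
      = Re (\<Sum>n\<in>I. \<Sum>m\<in>I. a n * cnj (a m) * complex_of_real (s n * s m))"
    by (metis Re_complex_of_real)
  then show ?thesis
    by (simp add: Re_sum)
qed

lemma energy_sum_sinc_translates:
  "energy (\<lambda>t. \<Sum>n\<in>I. a n * complex_of_real (sinc (t - lam n)))
     = ennreal (\<Sum>n\<in>I. \<Sum>m\<in>I. Re (a n * cnj (a m)) * sinc (lam n - lam m))"
proof -
  let ?g = "\<lambda>t. \<Sum>n\<in>I. \<Sum>m\<in>I. Re (a n * cnj (a m)) * (sinc (t - lam n) * sinc (t - lam m))"
  have g: "?g t = (cmod (\<Sum>n\<in>I. a n * complex_of_real (sinc (t - lam n))))\<^sup>2" for t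
    by (rule cmod_sum_sq[symmetric])
  have "integrable lborel ?g"
    using sinc_translates_integrable by (intro Bochner_Integration.integrable_sum integrable_mult_right)
  have "energy (\<lambda>t. \<Sum>n\<in>I. a n * complex_of_real (sinc (t - lam n))) = (\<integral>\<^sup>+ t. ennreal (?g t) \<partial>lborel)"
    unfolding energy_def g ..
  also have "\<dots> = ennreal (integral\<^sup>L lborel ?g)"
    by (rule nn_integral_eq_integral[OF \<open>integrable lborel ?g\<close>]) (unfold g, simp)
  also have "integral\<^sup>L lborel ?g = (\<Sum>n\<in>I. \<Sum>m\<in>I. Re (a n * cnj (a m)) * sinc (lam n - lam m))"
    using sinc_translates_integrable
    by (simp add: sinc_translates_integral Bochner_Integration.integrable_sum)
  finally show ?thesis .
qed

lemma sum_inverse_square_separated_shifted: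
  fixes P :: "real set"
  assumes "finite P" "\<gamma> > 0" "c \<ge> 0" "\<forall>x\<in>P. c + \<gamma> \<le> x"
    and "\<forall>x\<in>P. \<forall>y\<in>P. x \<noteq> y \<longrightarrow> \<gamma> \<le> \<bar>x - y\<bar>"
  shows "(\<Sum>x\<in>P. 1 / x\<^sup>2) \<le> (\<Sum>k<card P. 1 / (c + (real k + 1) * \<gamma>)\<^sup>2)"
  using assms
proof (induction "card P" arbitrary: P c)
  case 0
  then show ?case by simp
next
  case (Suc N)
  have "P \<noteq> {}"
    using Suc.hyps(2) by auto
  define q where "q = Min P"
  have q: "q \<in> P" "\<And>x. x \<in> P \<Longrightarrow> q \<le> x"
    using Suc.prems(1) \<open>P \<noteq> {}\<close> by (auto simp: q_def)
  define P' where "P' = P - {q}"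
  have card: "card P' = N"
    using Suc q by (simp add: P'_def)
  have "\<forall>x\<in>P'. (c + \<gamma>) + \<gamma> \<le> x"
  proof
    fix x
    assume "x \<in> P'"
    then have "x \<in> P" "x \<noteq> q"
      by (auto simp: P'_def)
    then have "\<gamma> \<le> \<bar>x - q\<bar>" "q \<le> x"
      using Suc.prems(5) q by blast+
    moreover have "c + \<gamma> \<le> q"
      using Suc.prems(4) q by blast
    ultimately show "(c + \<gamma>) + \<gamma> \<le> x"
      by linarith
  qed
  then have IH: "(\<Sum>x\<in>P'. 1 / x\<^sup>2) \<le> (\<Sum>k<N. 1 / ((c + \<gamma>) + (real k + 1) * \<gamma>)\<^sup>2)"
    using Suc.hyps(1)[of P' "c + \<gamma>"] Suc.prems card by (auto simp: P'_def)
  have "1 / q\<^sup>2 \<le> 1 / (c + \<gamma>)\<^sup>2"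
    using Suc.prems(2-4) q by (auto intro!: divide_left_mono power_mono)
  then have "(\<Sum>x\<in>P. 1 / x\<^sup>2) \<le> 1 / (c + (real 0 + 1) * \<gamma>)\<^sup>2
      + (\<Sum>k<N. 1 / (c + (real (Suc k) + 1) * \<gamma>)\<^sup>2)"
    using IH Suc.prems(1) q by (simp add: P'_def sum.remove algebra_simps)
  also have "\<dots> = (\<Sum>k<Suc N. 1 / (c + (real k + 1) * \<gamma>)\<^sup>2)"
    by (simp only: sum.lessThan_Suc_shift)
  finally show ?case
    using Suc.hyps(2) by simp
qed

lemma sum_inverse_square_separated:
  fixes P :: "real set"
  assumes "finite P" "\<gamma> > 0" "\<forall>x\<in>P. \<gamma> \<le> x"
    and "\<forall>x\<in>P. \<forall>y\<in>P. x \<noteq> y \<longrightarrow> \<gamma> \<le> \<bar>x - y\<bar>"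
  shows "(\<Sum>x\<in>P. 1 / x\<^sup>2) \<le> pi\<^sup>2 / (6 * \<gamma>\<^sup>2)"
proof -
  have "(\<Sum>x\<in>P. 1 / x\<^sup>2) \<le> (\<Sum>k<card P. 1 / (0 + (real k + 1) * \<gamma>)\<^sup>2)"
    by (rule sum_inverse_square_separated_shifted) (use assms in auto)
  also have "\<dots> = (\<Sum>k<card P. 1 / real ((k + 1)\<^sup>2)) / \<gamma>\<^sup>2"
    unfolding sum_divide_distrib by (intro sum.cong refl) (simp add: field_simps power2_eq_square)
  also have "\<dots> \<le> (pi\<^sup>2 / 6) / \<gamma>\<^sup>2"
    using sum_le_suminf[OF sums_summable[OF inverse_squares_sums], of "{..<card P}"]
      sums_unique[OF inverse_squares_sums]
    by (intro divide_right_mono) simp_all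
  finally show ?thesis
    by simp
qed

lemma residual_term_le:
  fixes u w g1 g2 \<mu> r \<eta> :: real
  assumes "\<bar>u\<bar> \<le> 1" "\<bar>w\<bar> \<le> 1" "\<bar>g1\<bar> \<le> \<eta>" "\<bar>g2\<bar> \<le> \<eta>" "0 \<le> \<mu>"
  shows "2 * \<mu> * (u * g1 + w * g2) - 2 * r * (u * g2 - w * g1) \<le> (4 * \<mu> + 4 * \<bar>r\<bar>) * \<eta>"
proof -
  have "\<bar>u * g1\<bar> \<le> \<eta>" "\<bar>w * g2\<bar> \<le> \<eta>" "\<bar>u * g2\<bar> \<le> \<eta>" "\<bar>w * g1\<bar> \<le> \<eta>"
    using assms unfolding abs_mult by (auto intro: mult_mono'[of _ 1 _ \<eta>, simplified])
  then have "2 * \<mu> * (u * g1 + w * g2) \<le> 2 * \<mu> * (2 * \<eta>)"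
    "\<bar>r\<bar> * \<bar>u * g2 - w * g1\<bar> \<le> \<bar>r\<bar> * (2 * \<eta>)"
    using assms(5) by (intro mult_left_mono; simp; linarith)+
  moreover have "- (r * (u * g2 - w * g1)) \<le> \<bar>r\<bar> * \<bar>u * g2 - w * g1\<bar>"
    by (metis abs_ge_minus_self abs_mult)
  ultimately show ?thesis
    by (simp add: algebra_simps)
qed

locale separated_nodes =
  fixes I :: "'i set" and lam :: "'i \<Rightarrow> real" and \<gamma> :: real
  assumes finite_I: "finite I" and gamma_pos: "\<gamma> > 0"
    and separated: "\<And>n m. n \<in> I \<Longrightarrow> m \<in> I \<Longrightarrow> n \<noteq> m \<Longrightarrow> \<gamma> \<le> \<bar>lam n - lam m\<bar>"
begin

lemma lam_neq: "n \<in> I \<Longrightarrow> m \<in> I \<Longrightarrow> n \<noteq> m \<Longrightarrow> lam n \<noteq> lam m"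
  using separated[of n m] gamma_pos by auto

definition kernel :: "'i \<Rightarrow> 'i \<Rightarrow> real" where
  "kernel m n = (if m = n then 0 else 1 / (lam m - lam n))"

definition hilbert :: "('i \<Rightarrow> real) \<Rightarrow> 'i \<Rightarrow> real" where
  "hilbert v m = (\<Sum>n\<in>I. kernel m n * v n)"

definition row_sum :: "'i \<Rightarrow> real" where
  "row_sum m = (\<Sum>n\<in>I. kernel m n)"

definition row_sq_sum :: "'i \<Rightarrow> real" where
  "row_sq_sum m = (\<Sum>n\<in>I. (kernel m n)\<^sup>2)"

definition dot :: "('i \<Rightarrow> real) \<Rightarrow> ('i \<Rightarrow> real) \<Rightarrow> real" where
  "dot u v = (\<Sum>n\<in>I. u n * v n)"

definition sqnorm :: "('i \<Rightarrow> real) \<Rightarrow> real" where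
  "sqnorm v = (\<Sum>n\<in>I. (v n)\<^sup>2)"

lemma kernel_swap: "kernel m n = - kernel n m"
proof -
  have "1 / (lam m - lam n) = - (1 / (lam n - lam m))"
    by (simp only: minus_diff_eq[symmetric, of "lam n"] divide_minus_right)
  then show ?thesis
    by (simp add: kernel_def)
qed

lemma kernel_sq_swap: "(kernel m n)\<^sup>2 = (kernel n m)\<^sup>2"
  by (simp add: kernel_swap[of m n])

lemma kernel_mult_kernel:
  assumes "m \<in> I" "n \<in> I" "k \<in> I" "n \<noteq> k" "m \<noteq> n" "m \<noteq> k"
  shows "kernel m n * kernel m k = kernel n k * (kernel m n - kernel m k)"
proof -
  have "lam m - lam n \<noteq> 0" "lam m - lam k \<noteq> 0" "lam n - lam k \<noteq> 0"
    using lam_neq assms by auto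
  then show ?thesis
    using assms by (simp add: kernel_def field_simps)
qed

lemma dot_hilbert_swap: "dot u (hilbert w) = - dot w (hilbert u)"
proof -
  have "dot u (hilbert w) = (\<Sum>n\<in>I. \<Sum>m\<in>I. u n * kernel n m * w m)"
    by (simp add: dot_def hilbert_def sum_distrib_left mult_ac)
  also have "\<dots> = (\<Sum>m\<in>I. \<Sum>n\<in>I. u n * kernel n m * w m)"
    by (rule sum.swap)
  also have "\<dots> = (\<Sum>m\<in>I. \<Sum>n\<in>I. - (w m * (kernel m n * u n)))"
  proof (intro sum.cong refl)
    fix m n
    show "u n * kernel n m * w m = - (w m * (kernel m n * u n))"
      using kernel_swap[of n m] by simp
  qed
  also have "\<dots> = - dot w (hilbert u)"
    by (simp add: dot_def hilbert_def sum_distrib_left sum_negf)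
  finally show ?thesis .
qed

lemma hilbert_diff_scale: "hilbert (\<lambda>n. u n - c * g n) m = hilbert u m - c * hilbert g m"
  by (simp add: hilbert_def algebra_simps sum_subtractf sum_distrib_left)

lemma sqnorm_nonneg: "0 \<le> sqnorm v"
  by (simp add: sqnorm_def sum_nonneg)

lemma sq_le_sqnorm: "n \<in> I \<Longrightarrow> (v n)\<^sup>2 \<le> sqnorm v"
  unfolding sqnorm_def by (rule member_le_sum) (auto simp: finite_I)

lemma sqnorm_scale: "sqnorm (\<lambda>n. c * v n) = c\<^sup>2 * sqnorm v"
  by (simp add: sqnorm_def power_mult_distrib sum_distrib_left)

lemma sqnorm_diff_scale: "sqnorm (\<lambda>n. u n - c * g n) = sqnorm u - 2 * c * dot u g + c\<^sup>2 * sqnorm g"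
  by (simp add: sqnorm_def dot_def power2_diff power_mult_distrib sum_subtractf sum.distrib
      sum_distrib_left algebra_simps)

lemma sqnorm_eq_0: "sqnorm v = 0 \<Longrightarrow> n \<in> I \<Longrightarrow> v n = 0"
  using sq_le_sqnorm[of n v] by simp

lemma kernel_mult_kernel_expand:
  assumes "m \<in> I" "n \<in> I" "k \<in> I"
  shows "kernel m n * kernel m k * v n * v k =
      (if n = k then (kernel m n)\<^sup>2 * (v n)\<^sup>2 else 0)
      + kernel n k * v n * v k * (kernel m n - kernel m k)
      + (if m = n then (kernel n k)\<^sup>2 * v n * v k else 0)
      + (if m = k then (kernel n k)\<^sup>2 * v n * v k else 0)"
proof -
  consider "n = k" | "n \<noteq> k" "m = n" | "n \<noteq> k" "m = k" | "n \<noteq> k" "m \<noteq> n" "m \<noteq> k"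
    by blast
  then show ?thesis
  proof cases
    case 3
    have "kernel k k = 0"
      by (simp add: kernel_def)
    with 3 show ?thesis
      by (simp add: kernel_swap[of k n] power2_eq_square algebra_simps)
  next
    case 4
    then show ?thesis
      using kernel_mult_kernel[OF assms] by (simp add: mult_ac)
  qed (simp_all add: kernel_def power2_eq_square)
qed

lemma sum_kernel_column: "(\<Sum>m\<in>I. kernel m n) = - row_sum n"
  by (simp add: row_sum_def kernel_swap[of _ n] sum_negf)

lemma sum_kernel_difference:
  "(\<Sum>m\<in>I. \<Sum>n\<in>I. \<Sum>k\<in>I. kernel n k * v n * v k * (kernel m n - kernel m k))
     = - 2 * (\<Sum>n\<in>I. v n * row_sum n * hilbert v n)"
proof -
  have "(\<Sum>m\<in>I. \<Sum>n\<in>I. \<Sum>k\<in>I. kernel n k * v n * v k * (kernel m n - kernel m k))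
      = (\<Sum>n\<in>I. \<Sum>m\<in>I. \<Sum>k\<in>I. kernel n k * v n * v k * (kernel m n - kernel m k))"
    by (rule sum.swap)
  also have "\<dots> = (\<Sum>n\<in>I. \<Sum>k\<in>I. \<Sum>m\<in>I. kernel n k * v n * v k * (kernel m n - kernel m k))"
    by (intro sum.cong refl sum.swap)
  also have "\<dots> = (\<Sum>n\<in>I. \<Sum>k\<in>I. kernel n k * v n * v k * (row_sum k - row_sum n))"
    by (simp add: sum_distrib_left[symmetric] sum_subtractf sum_kernel_column)
  also have "\<dots> = dot v (hilbert (\<lambda>k. v k * row_sum k)) - dot (\<lambda>n. v n * row_sum n) (hilbert v)"
    by (simp add: dot_def hilbert_def algebra_simps sum_subtractf sum_distrib_left)
  also have "\<dots> = - 2 * (\<Sum>n\<in>I. v n * row_sum n * hilbert v n)"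
    using dot_hilbert_swap[of v "\<lambda>k. v k * row_sum k"] by (simp add: dot_def)
  finally show ?thesis .
qed

text \<open>The identity behind the Montgomery--Vaughan inequality: expanding \<open>\<Sum>\<^sub>m (hilbert v m)\<^sup>2\<close>
  and applying \<open>kernel_mult_kernel\<close> to the off-diagonal products leaves only terms
  controlled by the squared kernel, plus a term involving the row sums.\<close>
lemma sum_sq_hilbert:
  "(\<Sum>m\<in>I. (hilbert v m)\<^sup>2) = (\<Sum>n\<in>I. (v n)\<^sup>2 * row_sq_sum n)
     + 2 * (\<Sum>n\<in>I. \<Sum>k\<in>I. (kernel n k)\<^sup>2 * v n * v k) - 2 * (\<Sum>n\<in>I. v n * row_sum n * hilbert v n)"
proof -
  let ?D = "\<Sum>n\<in>I. \<Sum>k\<in>I. (kernel n k)\<^sup>2 * v n * v k"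
  have "(\<Sum>m\<in>I. (hilbert v m)\<^sup>2) = (\<Sum>m\<in>I. \<Sum>n\<in>I. \<Sum>k\<in>I. kernel m n * kernel m k * v n * v k)"
    by (simp add: hilbert_def power2_eq_square sum_product mult_ac)
  also have "\<dots> = (\<Sum>m\<in>I. \<Sum>n\<in>I. \<Sum>k\<in>I. (if n = k then (kernel m n)\<^sup>2 * (v n)\<^sup>2 else 0))
     + (\<Sum>m\<in>I. \<Sum>n\<in>I. \<Sum>k\<in>I. kernel n k * v n * v k * (kernel m n - kernel m k))
     + (\<Sum>m\<in>I. \<Sum>n\<in>I. \<Sum>k\<in>I. (if m = n then (kernel n k)\<^sup>2 * v n * v k else 0))
     + (\<Sum>m\<in>I. \<Sum>n\<in>I. \<Sum>k\<in>I. (if m = k then (kernel n k)\<^sup>2 * v n * v k else 0))"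
    by (simp add: kernel_mult_kernel_expand sum.distrib cong: sum.cong)
  also have "(\<Sum>m\<in>I. \<Sum>n\<in>I. \<Sum>k\<in>I. (if n = k then (kernel m n)\<^sup>2 * (v n)\<^sup>2 else 0))
      = (\<Sum>n\<in>I. (v n)\<^sup>2 * row_sq_sum n)"
  proof -
    have "(\<Sum>m\<in>I. \<Sum>n\<in>I. \<Sum>k\<in>I. (if n = k then (kernel m n)\<^sup>2 * (v n)\<^sup>2 else 0))
        = (\<Sum>m\<in>I. \<Sum>n\<in>I. (kernel m n)\<^sup>2 * (v n)\<^sup>2)"
      using finite_I by (simp add: sum.delta)
    also have "\<dots> = (\<Sum>n\<in>I. \<Sum>m\<in>I. (kernel n m)\<^sup>2 * (v n)\<^sup>2)"
      by (subst sum.swap) (simp add: kernel_sq_swap)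
    finally show ?thesis
      by (simp add: row_sq_sum_def sum_distrib_left mult_ac)
  qed
  also have "(\<Sum>m\<in>I. \<Sum>n\<in>I. \<Sum>k\<in>I. (if m = n then (kernel n k)\<^sup>2 * v n * v k else 0)) = ?D"
  proof (rule sum.cong[OF refl])
    fix m
    assume "m \<in> I"
    have "(\<Sum>k\<in>I. (if m = n then (kernel n k)\<^sup>2 * v n * v k else 0))
        = (if m = n then (\<Sum>k\<in>I. (kernel n k)\<^sup>2 * v n * v k) else 0)" for n
      by simp
    then show "(\<Sum>n\<in>I. \<Sum>k\<in>I. (if m = n then (kernel n k)\<^sup>2 * v n * v k else 0))
        = (\<Sum>k\<in>I. (kernel m k)\<^sup>2 * v m * v k)"
      using finite_I \<open>m \<in> I\<close> by (simp add: sum.delta)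
  qed
  also have "(\<Sum>m\<in>I. \<Sum>n\<in>I. \<Sum>k\<in>I. (if m = k then (kernel n k)\<^sup>2 * v n * v k else 0))
      = (\<Sum>m\<in>I. \<Sum>n\<in>I. (kernel n m)\<^sup>2 * v n * v m)"
    using finite_I by (intro sum.cong refl) (simp add: sum.delta)
  also have "\<dots> = ?D"
    by (rule sum.swap)
  also have "(\<Sum>m\<in>I. \<Sum>n\<in>I. \<Sum>k\<in>I. kernel n k * v n * v k * (kernel m n - kernel m k))
      = - 2 * (\<Sum>n\<in>I. v n * row_sum n * hilbert v n)"
    by (rule sum_kernel_difference)
  finally show ?thesis
    by simp
qed

lemma row_sq_sum_one_side:
  assumes n: "n \<in> I" and A: "A \<subseteq> I" and s: "s = 1 \<or> s = -1"
    and side: "\<And>m. m \<in> A \<Longrightarrow> 0 < s * (lam m - lam n)"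
  shows "(\<Sum>m\<in>A. (kernel n m)\<^sup>2) \<le> pi\<^sup>2 / (6 * \<gamma>\<^sup>2)"
proof -
  define f where "f m = s * (lam m - lam n)" for m
  have f_abs: "f m = \<bar>lam n - lam m\<bar>" if "m \<in> A" for m
    using side[OF that] s by (auto simp: f_def)
  have "inj_on f A"
    using s by (auto intro!: inj_onI simp: f_def) (use lam_neq A in blast)+
  have "(\<Sum>m\<in>A. (kernel n m)\<^sup>2) = (\<Sum>m\<in>A. 1 / (f m)\<^sup>2)"
    using side f_abs by (intro sum.cong refl) (force simp: kernel_def power_divide)
  also have "\<dots> = (\<Sum>x\<in>f ` A. 1 / x\<^sup>2)"
    by (simp add: sum.reindex[OF \<open>inj_on f A\<close>])
  also have "\<dots> \<le> pi\<^sup>2 / (6 * \<gamma>\<^sup>2)"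
  proof (rule sum_inverse_square_separated)
    show "finite (f ` A)"
      using A finite_I finite_subset by blast
    show "\<forall>x\<in>f ` A. \<gamma> \<le> x"
      using separated n A side f_abs by force
    have "\<bar>f a - f b\<bar> = \<bar>lam a - lam b\<bar>" for a b
      using s by (auto simp: f_def algebra_simps)
    then show "\<forall>x\<in>f ` A. \<forall>y\<in>f ` A. x \<noteq> y \<longrightarrow> \<gamma> \<le> \<bar>x - y\<bar>"
      using separated A by (metis image_iff subsetD)
  qed (rule gamma_pos)
  finally show ?thesis .
qed

lemma row_sq_sum_le: "n \<in> I \<Longrightarrow> row_sq_sum n \<le> pi\<^sup>2 / (3 * \<gamma>\<^sup>2)"
proof -
  assume n: "n \<in> I"
  define A where "A = {m \<in> I. lam n < lam m}"
  define B where "B = {m \<in> I. lam m < lam n}"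
  have "row_sq_sum n = (\<Sum>m\<in>A \<union> B. (kernel n m)\<^sup>2)"
    unfolding row_sq_sum_def
    by (rule sum.mono_neutral_right[OF finite_I])
       (auto simp: A_def B_def kernel_def dest: lam_neq[OF n])
  also have "\<dots> = (\<Sum>m\<in>A. (kernel n m)\<^sup>2) + (\<Sum>m\<in>B. (kernel n m)\<^sup>2)"
    by (rule sum.union_disjoint) (use finite_I in \<open>auto simp: A_def B_def\<close>)
  also have "\<dots> \<le> pi\<^sup>2 / (6 * \<gamma>\<^sup>2) + pi\<^sup>2 / (6 * \<gamma>\<^sup>2)"
    by (intro add_mono row_sq_sum_one_side[OF n, where s=1] row_sq_sum_one_side[OF n, where s="-1"])
       (auto simp: A_def B_def)
  finally show ?thesis
    by simp
qed

lemma kernel_sq_form_le: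
  "(\<Sum>n\<in>I. \<Sum>k\<in>I. (kernel n k)\<^sup>2 * v n * v k) \<le> (\<Sum>n\<in>I. (v n)\<^sup>2 * row_sq_sum n)"
proof -
  have "2 * (\<Sum>n\<in>I. \<Sum>k\<in>I. (kernel n k)\<^sup>2 * v n * v k)
      = (\<Sum>n\<in>I. \<Sum>k\<in>I. (kernel n k)\<^sup>2 * (2 * v n * v k))"
    by (simp add: sum_distrib_left mult_ac)
  also have "\<dots> \<le> (\<Sum>n\<in>I. \<Sum>k\<in>I. (kernel n k)\<^sup>2 * (v n)\<^sup>2 + (kernel n k)\<^sup>2 * (v k)\<^sup>2)"
    unfolding distrib_left[symmetric] by (intro sum_mono mult_left_mono sum_squares_bound) simp_all
  also have "\<dots> = (\<Sum>n\<in>I. \<Sum>k\<in>I. (kernel n k)\<^sup>2 * (v n)\<^sup>2)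
      + (\<Sum>n\<in>I. \<Sum>k\<in>I. (kernel n k)\<^sup>2 * (v k)\<^sup>2)"
    by (simp add: sum.distrib)
  also have "(\<Sum>n\<in>I. \<Sum>k\<in>I. (kernel n k)\<^sup>2 * (v k)\<^sup>2) = (\<Sum>k\<in>I. \<Sum>n\<in>I. (kernel k n)\<^sup>2 * (v k)\<^sup>2)"
    by (subst sum.swap) (simp add: kernel_sq_swap)
  also have "(\<Sum>n\<in>I. \<Sum>k\<in>I. (kernel n k)\<^sup>2 * (v n)\<^sup>2) + (\<Sum>k\<in>I. \<Sum>n\<in>I. (kernel k n)\<^sup>2 * (v k)\<^sup>2)
      = 2 * (\<Sum>n\<in>I. (v n)\<^sup>2 * row_sq_sum n)"
    by (simp add: row_sq_sum_def sum_distrib_left mult_ac)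
  finally show ?thesis
    by simp
qed

lemma sum_sq_hilbert_le:
  "(\<Sum>m\<in>I. (hilbert v m)\<^sup>2) \<le> (pi / \<gamma>)\<^sup>2 * sqnorm v - 2 * (\<Sum>n\<in>I. v n * row_sum n * hilbert v n)"
proof -
  have "(\<Sum>n\<in>I. (v n)\<^sup>2 * row_sq_sum n) \<le> (\<Sum>n\<in>I. (v n)\<^sup>2 * (pi\<^sup>2 / (3 * \<gamma>\<^sup>2)))"
    by (intro sum_mono mult_left_mono row_sq_sum_le) auto
  also have "\<dots> = (pi / \<gamma>)\<^sup>2 * sqnorm v / 3"
    by (simp add: sqnorm_def sum_distrib_left sum_divide_distrib power_divide mult_ac)
  finally show ?thesis
    using sum_sq_hilbert[of v] kernel_sq_form_le[of v] by linarith
qed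

definition hilbert_form :: "('i \<Rightarrow> real) \<Rightarrow> ('i \<Rightarrow> real) \<Rightarrow> real" where
  "hilbert_form u w = 2 * dot u (hilbert w)"

definition kernel_abs_sum :: real where
  "kernel_abs_sum = (\<Sum>n\<in>I. \<Sum>m\<in>I. \<bar>kernel n m\<bar>)"

lemma hilbert_form_scale: "hilbert_form (\<lambda>n. c * u n) (\<lambda>n. c * w n) = c\<^sup>2 * hilbert_form u w"
  by (simp add: hilbert_form_def dot_def hilbert_def sum_distrib_left power2_eq_square mult_ac)

lemma hilbert_form_diff_scale:
  "hilbert_form (\<lambda>n. u n - c * g n) (\<lambda>n. w n - c * h n)
     = hilbert_form u w - c * (hilbert_form g w + hilbert_form u h) + c\<^sup>2 * hilbert_form g h"
  by (simp add: hilbert_form_def dot_def hilbert_diff_scale power2_eq_square sum.distrib sum_subtractf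
      sum_distrib_left algebra_simps)

lemma abs_hilbert_form_le: "\<bar>hilbert_form u w\<bar> \<le> kernel_abs_sum * (sqnorm u + sqnorm w)"
proof -
  have "\<bar>hilbert_form u w\<bar> = \<bar>\<Sum>n\<in>I. \<Sum>m\<in>I. kernel n m * (2 * u n * w m)\<bar>"
    by (simp add: hilbert_form_def dot_def hilbert_def sum_distrib_left mult_ac)
  also have "\<dots> \<le> (\<Sum>n\<in>I. \<Sum>m\<in>I. \<bar>kernel n m\<bar> * \<bar>2 * u n * w m\<bar>)"
    by (rule order_trans[OF sum_abs sum_mono]) (simp add: order_trans[OF sum_abs] abs_mult)
  also have "\<dots> \<le> (\<Sum>n\<in>I. \<Sum>m\<in>I. \<bar>kernel n m\<bar> * (sqnorm u + sqnorm w))"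
  proof (intro sum_mono mult_left_mono)
    fix n m
    assume "n \<in> I" "m \<in> I"
    then have "(u n)\<^sup>2 + (w m)\<^sup>2 \<le> sqnorm u + sqnorm w"
      by (intro add_mono sq_le_sqnorm)
    then show "\<bar>2 * u n * w m\<bar> \<le> sqnorm u + sqnorm w"
      using sum_squares_bound[of "\<bar>u n\<bar>" "\<bar>w m\<bar>"] by (simp add: abs_mult)
  qed simp
  finally show ?thesis
    by (simp add: kernel_abs_sum_def sum_distrib_right)
qed

text \<open>The norm of the skew-symmetric form, i.e.\ the largest eigenvalue of the symmetric
  operator \<open>(u, w) \<mapsto> (hilbert w, - hilbert u)\<close>; the \<open>0\<close> only matters when \<open>I = {}\<close>.\<close>
definition hilbert_norm :: real where
  "hilbert_norm = Sup (insert 0 {hilbert_form u w | u w. sqnorm u + sqnorm w = 1})"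

lemma bdd_above_hilbert_form_values:
  "bdd_above (insert 0 {hilbert_form u w | u w. sqnorm u + sqnorm w = 1})"
proof (rule bdd_aboveI[of _ kernel_abs_sum])
  fix x
  assume "x \<in> insert 0 {hilbert_form u w | u w. sqnorm u + sqnorm w = 1}"
  moreover have "0 \<le> kernel_abs_sum"
    by (simp add: kernel_abs_sum_def sum_nonneg)
  moreover have "hilbert_form u w \<le> kernel_abs_sum" if "sqnorm u + sqnorm w = 1" for u w
    using abs_hilbert_form_le[of u w] that by simp
  ultimately show "x \<le> kernel_abs_sum"
    by blast
qed

lemma hilbert_norm_nonneg: "0 \<le> hilbert_norm"
  unfolding hilbert_norm_def by (rule cSup_upper[OF insertI1 bdd_above_hilbert_form_values])

lemma hilbert_form_le_norm: "hilbert_form u w \<le> hilbert_norm * (sqnorm u + sqnorm w)"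
proof (cases "sqnorm u + sqnorm w = 0")
  case True
  then have "sqnorm u = 0"
    using sqnorm_nonneg[of u] sqnorm_nonneg[of w] by linarith
  then have "hilbert_form u w = 0"
    by (simp add: hilbert_form_def dot_def sqnorm_eq_0)
  then show ?thesis
    using True by simp
next
  case False
  then have N: "0 < sqnorm u + sqnorm w"
    using sqnorm_nonneg[of u] sqnorm_nonneg[of w] by linarith
  define c where "c = 1 / sqrt (sqnorm u + sqnorm w)"
  have c2: "c\<^sup>2 = 1 / (sqnorm u + sqnorm w)"
    using N by (simp add: c_def power_divide)
  have "sqnorm (\<lambda>n. c * u n) + sqnorm (\<lambda>n. c * w n) = 1"
    using N by (simp add: sqnorm_scale c2 add_divide_distrib[symmetric])
  then have "hilbert_form (\<lambda>n. c * u n) (\<lambda>n. c * w n) \<le> hilbert_norm"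
    unfolding hilbert_norm_def by (intro cSup_upper bdd_above_hilbert_form_values) blast
  then show ?thesis
    using N by (simp add: hilbert_form_scale c2 divide_le_eq mult.commute)
qed

lemma hilbert_norm_approximately_attained:
  assumes "I \<noteq> {}" "\<epsilon> > 0"
  obtains u w where "sqnorm u + sqnorm w = 1" "hilbert_norm - \<epsilon> < hilbert_form u w"
proof -
  let ?V = "{hilbert_form u w | u w. sqnorm u + sqnorm w = 1}"
  have "\<exists>x\<in>insert 0 ?V. hilbert_norm - \<epsilon> < x"
    unfolding hilbert_norm_def by (rule less_cSupD) (use assms(2) in auto)
  then obtain x where x: "x \<in> insert 0 ?V" "hilbert_norm - \<epsilon> < x"
    by blast
  obtain n0 where "n0 \<in> I"
    using assms(1) by blast
  define e where "e n = (if n = n0 then 1 else 0 :: real)" for n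
  have "sqnorm e = sum e I"
    unfolding sqnorm_def by (intro sum.cong refl) (simp add: e_def)
  with \<open>n0 \<in> I\<close> have "sqnorm e + sqnorm (\<lambda>_. 0) = 1"
    using finite_I by (simp add: e_def sqnorm_def)
  moreover have "hilbert_form e (\<lambda>_. 0) = 0"
    by (simp add: hilbert_form_def dot_def hilbert_def)
  ultimately have "0 \<in> ?V"
    by (intro CollectI exI[of _ e] exI[of _ "\<lambda>_. 0"]) simp
  then have "x \<in> ?V"
    using x(1) by (simp add: insert_absorb)
  with x(2) show ?thesis
    using that by auto
qed

lemma residual_identity:
  assumes "g1 = (\<lambda>n. c * u n - hilbert w n)" "g2 = (\<lambda>n. c * w n + hilbert u n)"
  shows "c * (dot u g1 + dot w g2) - (hilbert_form g1 w + hilbert_form u g2) / 2 = sqnorm g1 + sqnorm g2"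
proof -
  have "hilbert_form u g2 = - 2 * dot g2 (hilbert u)"
    using dot_hilbert_swap[of u g2] by (simp add: hilbert_form_def)
  then have "c * (dot u g1 + dot w g2) - (hilbert_form g1 w + hilbert_form u g2) / 2
      = c * dot u g1 + c * dot w g2 - dot g1 (hilbert w) + dot g2 (hilbert u)"
    by (simp add: hilbert_form_def field_simps)
  also have "\<dots> = (\<Sum>n\<in>I. g1 n * (c * u n - hilbert w n)) + (\<Sum>n\<in>I. g2 n * (c * w n + hilbert u n))"
    by (simp add: dot_def sum_distrib_left sum_subtractf sum.distrib algebra_simps)
  also have "\<dots> = sqnorm g1 + sqnorm g2"
    by (simp add: assms sqnorm_def power2_eq_square)
  finally show ?thesis .
qed

text \<open>Approximate eigenvectors for the eigenvalue \<open>hilbert_norm\<close>: a vector that nearly attains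
  the supremum makes the positive semidefinite form
  \<open>hilbert_norm * (sqnorm u + sqnorm w) - hilbert_form u w\<close> nearly vanish, hence nearly
  annihilates its gradient \<open>(g1, g2)\<close>.\<close>
lemma approximate_eigenvector:
  assumes "I \<noteq> {}" "\<epsilon> > 0"
  obtains u w where "sqnorm u + sqnorm w = 1"
    "sqnorm (\<lambda>n. hilbert_norm * u n - hilbert w n) + sqnorm (\<lambda>n. hilbert_norm * w n + hilbert u n) \<le> \<epsilon>"
proof -
  let ?\<mu> = hilbert_norm
  define K where "K = ?\<mu> + kernel_abs_sum + 1"
  have "0 \<le> kernel_abs_sum"
    by (simp add: kernel_abs_sum_def sum_nonneg)
  then have K: "0 < K"
    using hilbert_norm_nonneg by (simp add: K_def)
  obtain u w where uw: "sqnorm u + sqnorm w = 1" "?\<mu> - \<epsilon> / K < hilbert_form u w"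
    using hilbert_norm_approximately_attained[OF assms(1)] assms(2) K by (metis divide_pos_pos)
  define g1 where "g1 n = ?\<mu> * u n - hilbert w n" for n
  define g2 where "g2 n = ?\<mu> * w n + hilbert u n" for n
  define G where "G = sqnorm g1 + sqnorm g2"
  have G_nonneg: "0 \<le> G"
    by (simp add: G_def sqnorm_nonneg)
  have cross: "?\<mu> * (dot u g1 + dot w g2) - (hilbert_form g1 w + hilbert_form u g2) / 2 = G"
    unfolding G_def by (rule residual_identity) (simp_all add: g1_def g2_def fun_eq_iff)
  define \<tau> where "\<tau> = 1 / K"
  have "0 \<le> ?\<mu> * (sqnorm (\<lambda>n. u n - \<tau> * g1 n) + sqnorm (\<lambda>n. w n - \<tau> * g2 n))
      - hilbert_form (\<lambda>n. u n - \<tau> * g1 n) (\<lambda>n. w n - \<tau> * g2 n)"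
    using hilbert_form_le_norm by simp
  also have "\<dots> = (?\<mu> * (sqnorm u + sqnorm w) - hilbert_form u w)
      - 2 * \<tau> * (?\<mu> * (dot u g1 + dot w g2) - (hilbert_form g1 w + hilbert_form u g2) / 2)
      + \<tau>\<^sup>2 * (?\<mu> * G - hilbert_form g1 g2)"
    unfolding sqnorm_diff_scale hilbert_form_diff_scale G_def by (simp add: algebra_simps)
  also have "\<dots> = (?\<mu> - hilbert_form u w) - 2 * \<tau> * G + \<tau>\<^sup>2 * (?\<mu> * G - hilbert_form g1 g2)"
    by (simp only: uw(1) cross mult_1_right)
  also have "\<dots> \<le> \<epsilon> / K - 2 * \<tau> * G + \<tau>\<^sup>2 * (K * G)"
    using uw(2) abs_hilbert_form_le[of g1 g2] G_nonneg hilbert_norm_nonneg \<open>0 \<le> kernel_abs_sum\<close> K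
    by (intro add_mono diff_mono mult_left_mono) (auto simp: K_def G_def \<tau>_def algebra_simps)
  also have "\<dots> = (\<epsilon> - G) / K"
    using K by (simp add: \<tau>_def power2_eq_square field_simps)
  finally have "G \<le> \<epsilon>"
    using K by (simp add: zero_le_divide_iff)
  then show ?thesis
    unfolding G_def g1_def g2_def by (rule that[OF uw(1)])
qed

text \<open>For an exact eigenvector (\<open>\<eta> = 0\<close>) the row-sum terms of \<open>sum_sq_hilbert_le\<close>
  cancel, which gives \<open>hilbert_norm \<le> pi / \<gamma>\<close>.\<close>
lemma hilbert_norm_sq_le:
  assumes uw: "sqnorm u + sqnorm w = 1"
    and res: "\<And>n. n \<in> I \<Longrightarrow>
      \<bar>hilbert_norm * u n - hilbert w n\<bar> \<le> \<eta> \<and> \<bar>hilbert_norm * w n + hilbert u n\<bar> \<le> \<eta>"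
  shows "hilbert_norm\<^sup>2 \<le> (pi / \<gamma>)\<^sup>2 + (\<Sum>n\<in>I. 4 * hilbert_norm + 4 * \<bar>row_sum n\<bar>) * \<eta>"
proof -
  let ?\<mu> = hilbert_norm
  define g1 where "g1 n = ?\<mu> * u n - hilbert w n" for n
  define g2 where "g2 n = ?\<mu> * w n + hilbert u n" for n
  have "?\<mu>\<^sup>2 = (\<Sum>n\<in>I. (?\<mu> * u n)\<^sup>2 + (?\<mu> * w n)\<^sup>2)"
    using uw by (simp add: sqnorm_def power_mult_distrib sum.distrib sum_distrib_left[symmetric]
        distrib_left[symmetric])
  also have "\<dots> \<le> (\<Sum>n\<in>I. (hilbert w n)\<^sup>2 + (hilbert u n)\<^sup>2 + 2 * ?\<mu> * (u n * g1 n + w n * g2 n))"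
  proof (rule sum_mono)
    fix n
    have "0 \<le> (g1 n)\<^sup>2 + (g2 n)\<^sup>2"
      by simp
    then show "(?\<mu> * u n)\<^sup>2 + (?\<mu> * w n)\<^sup>2
        \<le> (hilbert w n)\<^sup>2 + (hilbert u n)\<^sup>2 + 2 * ?\<mu> * (u n * g1 n + w n * g2 n)"
      by (simp add: g1_def g2_def power2_eq_square algebra_simps)
  qed
  also have "\<dots> \<le> (pi / \<gamma>)\<^sup>2 * (sqnorm w + sqnorm u)
      - 2 * ((\<Sum>n\<in>I. w n * row_sum n * hilbert w n) + (\<Sum>n\<in>I. u n * row_sum n * hilbert u n))
      + (\<Sum>n\<in>I. 2 * ?\<mu> * (u n * g1 n + w n * g2 n))"
    using sum_sq_hilbert_le[of w] sum_sq_hilbert_le[of u] by (simp add: sum.distrib algebra_simps)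
  also have "(\<Sum>n\<in>I. w n * row_sum n * hilbert w n) + (\<Sum>n\<in>I. u n * row_sum n * hilbert u n)
      = (\<Sum>n\<in>I. row_sum n * (u n * g2 n - w n * g1 n))"
    by (simp add: g1_def g2_def sum.distrib[symmetric] algebra_simps)
  also have "(pi / \<gamma>)\<^sup>2 * (sqnorm w + sqnorm u) - 2 * (\<Sum>n\<in>I. row_sum n * (u n * g2 n - w n * g1 n))
      + (\<Sum>n\<in>I. 2 * ?\<mu> * (u n * g1 n + w n * g2 n))
      = (pi / \<gamma>)\<^sup>2 + (\<Sum>n\<in>I. 2 * ?\<mu> * (u n * g1 n + w n * g2 n)
        - 2 * row_sum n * (u n * g2 n - w n * g1 n))"
    using uw by (simp add: sum_subtractf sum_distrib_left mult.assoc add.commute)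
  also have "\<dots> \<le> (pi / \<gamma>)\<^sup>2 + (\<Sum>n\<in>I. (4 * ?\<mu> + 4 * \<bar>row_sum n\<bar>) * \<eta>)"
  proof (intro add_left_mono sum_mono residual_term_le hilbert_norm_nonneg)
    fix n
    assume n: "n \<in> I"
    have "(u n)\<^sup>2 \<le> 1" "(w n)\<^sup>2 \<le> 1"
      using sq_le_sqnorm[OF n, of u] sq_le_sqnorm[OF n, of w] uw sqnorm_nonneg[of u] sqnorm_nonneg[of w]
      by linarith+
    then show "\<bar>u n\<bar> \<le> 1" "\<bar>w n\<bar> \<le> 1"
      by (simp_all add: abs_square_le_1)
    show "\<bar>g1 n\<bar> \<le> \<eta>" "\<bar>g2 n\<bar> \<le> \<eta>"
      using res[OF n] by (simp_all add: g1_def g2_def)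
  qed
  finally show ?thesis
    by (simp add: sum_distrib_right)
qed

lemma hilbert_norm_le: "hilbert_norm \<le> pi / \<gamma>"
proof (cases "I = {}")
  case True
  then show ?thesis
    unfolding hilbert_norm_def sqnorm_def using gamma_pos by simp
next
  case False
  define E where "E = (\<Sum>n\<in>I. 4 * hilbert_norm + 4 * \<bar>row_sum n\<bar>)"
  have E: "0 \<le> E"
    unfolding E_def using hilbert_norm_nonneg by (intro sum_nonneg) simp
  have "hilbert_norm\<^sup>2 \<le> (pi / \<gamma>)\<^sup>2"
  proof (rule field_le_epsilon)
    fix \<delta> :: real
    assume "0 < \<delta>"
    define \<eta> where "\<eta> = \<delta> / (E + 1)"
    have \<eta>: "0 < \<eta>"
      using \<open>0 < \<delta>\<close> E by (simp add: \<eta>_def)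
    obtain u w where uw: "sqnorm u + sqnorm w = 1"
      "sqnorm (\<lambda>n. hilbert_norm * u n - hilbert w n) + sqnorm (\<lambda>n. hilbert_norm * w n + hilbert u n) \<le> \<eta>\<^sup>2"
      using approximate_eigenvector[OF False, of "\<eta>\<^sup>2"] \<eta> by auto
    define g1 where "g1 n = hilbert_norm * u n - hilbert w n" for n
    define g2 where "g2 n = hilbert_norm * w n + hilbert u n" for n
    have "\<bar>g1 n\<bar> \<le> \<eta> \<and> \<bar>g2 n\<bar> \<le> \<eta>" if "n \<in> I" for n
    proof -
      have "(g1 n)\<^sup>2 \<le> \<eta>\<^sup>2" "(g2 n)\<^sup>2 \<le> \<eta>\<^sup>2"
        using sq_le_sqnorm[OF that, of g1] sq_le_sqnorm[OF that, of g2] uw(2)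
          sqnorm_nonneg[of g1] sqnorm_nonneg[of g2]
        unfolding g1_def[symmetric] g2_def[symmetric] by linarith+
      then show ?thesis
        using power2_le_iff_abs_le[of \<eta>] \<eta> by simp
    qed
    then have "hilbert_norm\<^sup>2 \<le> (pi / \<gamma>)\<^sup>2 + E * \<eta>"
      unfolding E_def g1_def g2_def by (rule hilbert_norm_sq_le[OF uw(1)])
    also have "E * \<eta> \<le> (E + 1) * \<eta>"
      using \<eta> by (intro mult_right_mono) auto
    also have "(E + 1) * \<eta> = \<delta>"
      using E by (simp add: \<eta>_def)
    finally show "hilbert_norm\<^sup>2 \<le> (pi / \<gamma>)\<^sup>2 + \<delta>"
      by simp
  qed
  then show ?thesis
    by (rule power2_le_imp_le) (use gamma_pos in simp)
qed

theorem hilbert_inequality: "hilbert_form u w \<le> pi / \<gamma> * (sqnorm u + sqnorm w)"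
  using hilbert_form_le_norm[of u w] mult_right_mono[OF hilbert_norm_le, of "sqnorm u + sqnorm w"]
    sqnorm_nonneg[of u] sqnorm_nonneg[of w] by linarith

lemma sinc_form_eq:
  "(\<Sum>n\<in>I. \<Sum>m\<in>I. v n * v m * sinc (lam n - lam m))
     = sqnorm v + hilbert_form (\<lambda>n. v n * sin (pi * lam n)) (\<lambda>n. v n * cos (pi * lam n)) / pi"
proof -
  define s where "s n = v n * sin (pi * lam n)" for n
  define c where "c n = v n * cos (pi * lam n)" for n
  have entry: "v n * v m * sinc (lam n - lam m)
      = (if n = m then (v n)\<^sup>2 else 0) + (kernel n m * s n * c m - kernel n m * c n * s m) / pi"
    if "n \<in> I" "m \<in> I" for n m
  proof (cases "n = m")
    case False
    define d where "d = lam n - lam m"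
    have d: "d \<noteq> 0"
      using lam_neq that False by (auto simp: d_def)
    have "sin (pi * d) = sin (pi * lam n) * cos (pi * lam m) - cos (pi * lam n) * sin (pi * lam m)"
      using sin_diff[of "pi * lam n" "pi * lam m"] by (simp add: d_def right_diff_distrib)
    then have "v n * v m * sinc (lam n - lam m) = v n * v m
        * ((sin (pi * lam n) * cos (pi * lam m) - cos (pi * lam n) * sin (pi * lam m)) / (pi * d))"
      using d by (simp add: sinc_def d_def[symmetric])
    also have "\<dots> = (if n = m then (v n)\<^sup>2 else 0) + (kernel n m * s n * c m - kernel n m * c n * s m) / pi"
      using d False by (simp add: kernel_def d_def[symmetric] s_def c_def field_simps)
    finally show ?thesis .
  qed (simp add: kernel_def sinc_def power2_eq_square)
  have "(\<Sum>n\<in>I. \<Sum>m\<in>I. v n * v m * sinc (lam n - lam m))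
      = (\<Sum>n\<in>I. \<Sum>m\<in>I. (if n = m then (v n)\<^sup>2 else 0))
        + ((\<Sum>n\<in>I. \<Sum>m\<in>I. kernel n m * s n * c m) - (\<Sum>n\<in>I. \<Sum>m\<in>I. kernel n m * c n * s m)) / pi"
    by (simp add: entry sum.distrib sum_subtractf sum_divide_distrib diff_divide_distrib cong: sum.cong)
  also have "\<dots> = sqnorm v + (dot s (hilbert c) - dot c (hilbert s)) / pi"
    using finite_I by (simp add: sqnorm_def dot_def hilbert_def sum_distrib_left mult_ac)
  also have "\<dots> = sqnorm v + hilbert_form s c / pi"
    using dot_hilbert_swap[of c s] by (simp add: hilbert_form_def)
  finally show ?thesis
    by (simp add: s_def[abs_def] c_def[abs_def])
qed

lemma sinc_form_ge: "(1 - 1 / \<gamma>) * sqnorm v \<le> (\<Sum>n\<in>I. \<Sum>m\<in>I. v n * v m * sinc (lam n - lam m))"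
proof -
  define s where "s n = v n * sin (pi * lam n)" for n
  define c where "c n = v n * cos (pi * lam n)" for n
  have "sqnorm (\<lambda>n. - s n) + sqnorm c = sqnorm v"
    by (simp add: sqnorm_def s_def c_def power_mult_distrib sum.distrib[symmetric]
        distrib_left[symmetric])
  moreover have "hilbert_form s c = - hilbert_form (\<lambda>n. - s n) c"
    by (simp add: hilbert_form_def dot_def sum_negf)
  ultimately have "- hilbert_form s c / pi \<le> 1 / \<gamma> * sqnorm v"
    using hilbert_inequality[of "\<lambda>n. - s n" c] by (simp add: divide_le_eq field_simps)
  then show ?thesis
    unfolding sinc_form_eq s_def c_def by (simp add: algebra_simps)
qed

lemma complex_sinc_form_ge:
  "(1 - 1 / \<gamma>) * (\<Sum>n\<in>I. (cmod (a n))\<^sup>2) \<le> (\<Sum>n\<in>I. \<Sum>m\<in>I. Re (a n * cnj (a m)) * sinc (lam n - lam m))"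
proof -
  have "(\<Sum>n\<in>I. \<Sum>m\<in>I. Re (a n * cnj (a m)) * sinc (lam n - lam m))
      = (\<Sum>n\<in>I. \<Sum>m\<in>I. Re (a n) * Re (a m) * sinc (lam n - lam m))
        + (\<Sum>n\<in>I. \<Sum>m\<in>I. Im (a n) * Im (a m) * sinc (lam n - lam m))"
    by (simp add: sum.distrib[symmetric] algebra_simps)
  moreover have "(\<Sum>n\<in>I. (cmod (a n))\<^sup>2) = sqnorm (\<lambda>n. Re (a n)) + sqnorm (\<lambda>n. Im (a n))"
    by (simp add: sqnorm_def cmod_power2 sum.distrib)
  ultimately show ?thesis
    using sinc_form_ge[of "\<lambda>n. Re (a n)"] sinc_form_ge[of "\<lambda>n. Im (a n)"] by (simp add: algebra_simps)
qed

end

lemma one_le_sqrt_third_plus_pi_sq: "1 \<le> sqrt (1/3 + pi\<^sup>2/12)"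
proof -
  have "3 * 3 < pi * pi"
    using pi_gt3 by (intro mult_strict_mono) auto
  then show ?thesis
    by (simp add: power2_eq_square)
qed

theorem theorem1:
  fixes R :: nat and a :: "nat \<Rightarrow> complex" and lam :: "nat \<Rightarrow> real" and \<gamma> :: real
  assumes gamma: "\<gamma> > sqrt (1/3 + pi\<^sup>2/12)"
    and sep: "\<And>n m. n \<in> {1..R} \<Longrightarrow> m \<in> {1..R} \<Longrightarrow> n \<noteq> m \<Longrightarrow> \<bar>lam n - lam m\<bar> \<ge> \<gamma>"
  shows "energy (\<lambda>t. \<Sum>n\<in>{1..R}. a n * complex_of_real (sinc (t - lam n)))
           \<ge> ennreal ((1 - sqrt (1/3 + pi\<^sup>2/12) / \<gamma>) * (\<Sum>n\<in>{1..R}. (cmod (a n))\<^sup>2))"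
proof -
  let ?C = "sqrt (1/3 + pi\<^sup>2/12)"
  have "1 \<le> ?C"
    by (rule one_le_sqrt_third_plus_pi_sq)
  then have "0 < \<gamma>"
    using gamma by linarith
  then interpret separated_nodes "{1..R}" lam \<gamma>
    using sep by unfold_locales auto
  have "(1 - ?C / \<gamma>) * (\<Sum>n\<in>{1..R}. (cmod (a n))\<^sup>2) \<le> (1 - 1 / \<gamma>) * (\<Sum>n\<in>{1..R}. (cmod (a n))\<^sup>2)"
    using \<open>1 \<le> ?C\<close> \<open>0 < \<gamma>\<close> by (intro mult_right_mono sum_nonneg) (auto simp: divide_right_mono)
  also have "\<dots> \<le> (\<Sum>n\<in>{1..R}. \<Sum>m\<in>{1..R}. Re (a n * cnj (a m)) * sinc (lam n - lam m))"
    by (rule complex_sinc_form_ge)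
  finally show ?thesis
    unfolding energy_sum_sinc_translates by (rule ennreal_leI)
qed

end
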